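(* Let $\mathfrak{g}$ be a finite-dimensional real Lie algebra, $h\colon\mathfrak{g}^{*}\to\mathbb{R}$ smooth, and $\eta(q,p) := Dh(-\operatorname{ad}_{q}^{*}p)\in\mathfrak{g}$ for $(q,p)\in\mathfrak{g}\times\mathfrak{g}^{*}$. Consider the system $$\dot q = \operatorname{ad}_{\eta(q,p)}q,\qquad \dot p = -\operatorname{ad}_{\eta(q,p)}^{*}p$$ (the canonical Hamiltonian system on $T^{*}\mathfrak{g}$ with Hamiltonian $H(q,p) = h(-\operatorname{ad}_q^{*}p)$). Let $\kappa(x,y) = \operatorname{tr}(\operatorname{ad}_x\circ\operatorname{ad}_y)$ be the Killing form of $\mathfrak{g}$. Then $\kappa(q,q)$ is an invariant (conserved quantity) of this system.
   Context: $\operatorname{ad}_{x}y=[x,y]$, $\operatorname{ad}_{x}^{*}$ is its dual: $\langle \operatorname{ad}_{x}^{*}\alpha, y\rangle = \langle \alpha,[x,y]\rangle$. For smooth $f\colon\mathfrak{g}^{*}\to\mathbb{R}$, $Df(\mu)\in\mathfrak{g}$ is defined by $\langle\delta\mu, Df(\mu)\rangle = \frac{d}{ds}\big|_{s=0}f(\mu+s\delta\mu)$. *)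

theory Defs
  imports "HOL-Analysis.Analysis"
begin

definition lie_bracket :: "('a::euclidean_space \<Rightarrow> 'a \<Rightarrow> 'a) \<Rightarrow> bool" where
  "lie_bracket br \<longleftrightarrow> bilinear br \<and> (\<forall>x. br x x = 0) \<and>
     (\<forall>x y z. br x (br y z) + br y (br z x) + br z (br x y) = 0)"

text \<open>The dual space g* is identified with g via the inner product:
  the functional alpha corresponds to (\<lambda>y. alpha \<bullet> y).\<close>

definition ad_star :: "('a::euclidean_space \<Rightarrow> 'a \<Rightarrow> 'a) \<Rightarrow> 'a \<Rightarrow> 'a \<Rightarrow> 'a" where
  "ad_star br x \<alpha> = adjoint (br x) \<alpha>"

definition trace_lin :: "('a::euclidean_space \<Rightarrow> 'a) \<Rightarrow> real" where
  "trace_lin f = (\<Sum>b\<in>Basis. f b \<bullet> b)"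

definition killing :: "('a::euclidean_space \<Rightarrow> 'a \<Rightarrow> 'a) \<Rightarrow> 'a \<Rightarrow> 'a \<Rightarrow> real" where
  "killing br x y = trace_lin (br x \<circ> br y)"

fun Ck :: "nat \<Rightarrow> ('a::euclidean_space \<Rightarrow> real) \<Rightarrow> bool" where
  "Ck 0 f = continuous_on UNIV f"
| "Ck (Suc k) f = ((\<forall>x. f differentiable (at x)) \<and>
      (\<forall>b\<in>Basis. Ck k (\<lambda>x. frechet_derivative f (at x) b)))"

definition smooth :: "('a::euclidean_space \<Rightarrow> real) \<Rightarrow> bool" where
  "smooth f \<longleftrightarrow> (\<forall>k. Ck k f)"

text \<open>Dh(mu) in g (= gradient): <delta, Dh mu> = d/ds h(mu + s delta) at s = 0.\<close>
definition Dh :: "('a::euclidean_space \<Rightarrow> real) \<Rightarrow> 'a \<Rightarrow> 'a" where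
  "Dh h \<mu> = (\<Sum>b\<in>Basis. frechet_derivative h (at \<mu>) b *\<^sub>R b)"

end

theory Submission
  imports Defs
begin

text \<open>Only the equation for q matters: it says that q moves along the adjoint action,
  q' = [\<eta>, q], whatever the velocity \<eta>(t) = Dh(-ad*_q p) is. The Killing form is
  ad-invariant, \<kappa>([e,x],y) + \<kappa>(x,[e,y]) = 0, so d/dt \<kappa>(q,q) = \<kappa>([\<eta>,q],q) + \<kappa>(q,[\<eta>,q])
  vanishes and \<kappa>(q,q) is constant on the interval. Invariance of \<kappa> follows from
  ad [x,y] = ad x ad y - ad y ad x (Jacobi) and tr(AB) = tr(BA).\<close>

lemma trace_lin_diff: "trace_lin (f - g) = trace_lin f - trace_lin g"
  unfolding trace_lin_def by (simp add: inner_diff_left sum_subtractf)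

lemma trace_lin_comp_commute:
  fixes f g :: "'a::euclidean_space \<Rightarrow> 'a"
  assumes "linear f" and "linear g"
  shows "trace_lin (f \<circ> g) = trace_lin (g \<circ> f)"
proof -
  have expand: "f (g b) \<bullet> b = (\<Sum>c\<in>Basis. (g b \<bullet> c) * (f c \<bullet> b))"
    if "linear f" for f g :: "'a \<Rightarrow> 'a" and b
  proof -
    have "f (g b) = f (\<Sum>c\<in>Basis. (g b \<bullet> c) *\<^sub>R c)" by (simp add: euclidean_representation)
    also have "\<dots> = (\<Sum>c\<in>Basis. (g b \<bullet> c) *\<^sub>R f c)"
      using that by (simp add: linear_sum linear_scale)
    finally show ?thesis by (simp add: inner_sum_left)
  qed
  have "trace_lin (f \<circ> g) = (\<Sum>b\<in>Basis. \<Sum>c\<in>Basis. (g b \<bullet> c) * (f c \<bullet> b))"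
    unfolding trace_lin_def using expand[OF assms(1)] by simp
  also have "\<dots> = (\<Sum>c\<in>Basis. \<Sum>b\<in>Basis. (f c \<bullet> b) * (g b \<bullet> c))"
    by (subst sum.swap) (simp add: mult.commute)
  also have "\<dots> = trace_lin (g \<circ> f)"
    unfolding trace_lin_def using expand[OF assms(2)] by simp
  finally show ?thesis .
qed

lemma lie_bracket_bilinear: "lie_bracket br \<Longrightarrow> bilinear br"
  by (simp add: lie_bracket_def)

lemma lie_bracket_linear: "lie_bracket br \<Longrightarrow> linear (br x)"
  using lie_bracket_bilinear by (auto simp: bilinear_def)

lemma lie_bracket_anticomm:
  assumes "lie_bracket br"
  shows "br x y = - br y x"
proof -
  have bl: "bilinear br" and alt: "\<And>x. br x x = 0"
    using assms by (auto simp: lie_bracket_def)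
  have "br (x + y) (x + y) = br x y + br y x"
    using alt[of x] alt[of y] by (simp add: bilinear_ladd[OF bl] bilinear_radd[OF bl])
  then show ?thesis
    using alt[of "x + y"] by (simp add: eq_neg_iff_add_eq_0)
qed

lemma lie_bracket_ad_bracket:
  assumes lie: "lie_bracket br"
  shows "br (br x y) = (br x \<circ> br y) - (br y \<circ> br x)"
proof
  fix w
  have "br x (br y w) + br y (br w x) + br w (br x y) = 0"
    using lie by (simp add: lie_bracket_def)
  moreover have "br y (br w x) = - br y (br x w)"
    using lie_bracket_anticomm[OF lie, of w x] lie_bracket_linear[OF lie, of y]
    by (simp add: linear_neg)
  moreover have "br w (br x y) = - br (br x y) w"
    by (rule lie_bracket_anticomm[OF lie])
  ultimately show "br (br x y) w = ((br x \<circ> br y) - (br y \<circ> br x)) w"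
    by (simp add: algebra_simps)
qed

lemma killing_ad_invariant:
  assumes lie: "lie_bracket br"
  shows "killing br (br x y) z + killing br y (br x z) = 0"
proof -
  have lin: "linear (br u)" for u by (rule lie_bracket_linear[OF lie])
  have "killing br (br x y) z = trace_lin (br x \<circ> (br y \<circ> br z)) - trace_lin (br y \<circ> br x \<circ> br z)"
    unfolding killing_def lie_bracket_ad_bracket[OF lie, of x y]
    by (simp add: fun_diff_def comp_def flip: trace_lin_diff)
  moreover have "killing br y (br x z) = trace_lin (br y \<circ> br x \<circ> br z) - trace_lin (br y \<circ> br z \<circ> br x)"
    unfolding killing_def lie_bracket_ad_bracket[OF lie, of x z]
    by (simp add: fun_diff_def comp_def linear_diff[OF lin] flip: trace_lin_diff)
  moreover have "trace_lin (br x \<circ> (br y \<circ> br z)) = trace_lin (br y \<circ> br z \<circ> br x)"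
    using trace_lin_comp_commute[OF lin linear_compose[OF lin lin]] by (simp add: comp_assoc)
  ultimately show ?thesis by simp
qed

lemma killing_bilinear:
  assumes lie: "lie_bracket br"
  shows "bilinear (killing br)"
proof -
  have bl: "bilinear br" by (rule lie_bracket_bilinear[OF lie])
  have lin: "linear (br z)" for z by (rule lie_bracket_linear[OF lie])
  have linl: "linear (\<lambda>x. br x z)" for z using bl by (simp add: bilinear_def)
  have "linear (\<lambda>u. killing br u v)" for v
    unfolding killing_def trace_lin_def o_def
    by (rule linearI)
       (simp_all add: linear_add[OF linl] linear_scale[OF linl] inner_add_left sum.distrib
         sum_distrib_left)
  moreover have "linear (\<lambda>v. killing br u v)" for u
    unfolding killing_def trace_lin_def o_def
    by (rule linearI)
       (simp_all add: linear_add[OF linl] linear_scale[OF linl] linear_add[OF lin]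
         linear_scale[OF lin] inner_add_left sum.distrib sum_distrib_left)
  ultimately show ?thesis unfolding bilinear_def by blast
qed

lemma invariant_form_constant_along_adjoint_flow:
  fixes B :: "'a::real_normed_vector \<Rightarrow> 'a \<Rightarrow> 'b::real_normed_vector"
  assumes B: "bounded_bilinear B"
    and invariant: "\<And>e x y. B (br e x) y + B x (br e y) = 0"
    and I: "is_interval I"
    and q': "\<And>t. t \<in> I \<Longrightarrow> (q has_vector_derivative br (e t) (q t)) (at t within I)"
    and "s \<in> I" "t \<in> I"
  shows "B (q s) (q s) = B (q t) (q t)"
proof -
  have "((\<lambda>t. B (q t) (q t)) has_derivative (\<lambda>_. 0)) (at t within I)" if "t \<in> I" for t
  proof -
    define v where "v = br (e t) (q t)"
    have dq: "(q has_derivative (\<lambda>h. h *\<^sub>R v)) (at t within I)"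
      using q'[OF \<open>t \<in> I\<close>] unfolding v_def has_vector_derivative_def .
    have "B (q t) (h *\<^sub>R v) + B (h *\<^sub>R v) (q t) = h *\<^sub>R (B v (q t) + B (q t) v)" for h
      by (simp add: bounded_bilinear.scaleR_left[OF B] bounded_bilinear.scaleR_right[OF B]
          scaleR_right_distrib)
    moreover have "B v (q t) + B (q t) v = 0"
      unfolding v_def by (rule invariant)
    ultimately show ?thesis
      using bounded_bilinear.FDERIV[OF B dq dq] by simp
  qed
  then obtain c where "\<forall>t\<in>I. B (q t) (q t) = c"
    using has_derivative_zero_constant[OF is_interval_convex[OF I]] by blast
  with assms show ?thesis by simp
qed

theorem proposition4p2:
  fixes br :: "'a::euclidean_space \<Rightarrow> 'a \<Rightarrow> 'a"
    and h :: "'a \<Rightarrow> real"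
    and q p :: "real \<Rightarrow> 'a"
    and I :: "real set"
  assumes lie: "lie_bracket br"
    and smooth_h: "smooth h"
    and I: "is_interval I"
    and q_eq: "\<And>t. t \<in> I \<Longrightarrow>
        (q has_vector_derivative br (Dh h (- ad_star br (q t) (p t))) (q t)) (at t within I)"
    and p_eq: "\<And>t. t \<in> I \<Longrightarrow>
        (p has_vector_derivative - ad_star br (Dh h (- ad_star br (q t) (p t))) (p t)) (at t within I)"
    and s: "s \<in> I" and t: "t \<in> I"
  shows "killing br (q s) (q s) = killing br (q t) (q t)"
proof -
  have "bounded_bilinear (killing br)"
    using killing_bilinear[OF lie] bilinear_conv_bounded_bilinear by blast
  then show ?thesis
    using invariant_form_constant_along_adjoint_flow[where e = "\<lambda>t. Dh h (- ad_star br (q t) (p t))",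
        OF _ killing_ad_invariant[OF lie] I q_eq s t]
    by blast
qed

end
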